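(* Let $G$ be a Hausdorff topological group with neutral element $e$ that is not NSS, and let $d:G\times G\to[0,\infty)$ be a continuous map with $d(e,e)=0$. Then there exists a sequence $(g_n)_{n\in\mathbb N}$ in $G\setminus\{e\}$ such that $\sum_{n\in\mathbb N} d(e,g_n^{m_n})<\infty$ for every sequence $(m_n)_{n\in\mathbb N}\in\mathbb Z^{\mathbb N}$.
   Context: A topological group $G$ is NSS if some neighborhood of $e$ contains no nontrivial subgroup of $G$. *)

theory Defs
  imports "HOL-Analysis.Analysis"
begin

text \<open>Topological groups are modelled by the type class topological_group_add
(a possibly non-commutative group written additively, with continuous addition and
negation); the neutral element e is 0 and g^m is written zpow_add m g.\<close>

definition is_subgroup_add :: "'a::group_add set \<Rightarrow> bool" where
  "is_subgroup_add H \<longleftrightarrow> 0 \<in> H \<and> (\<forall>x\<in>H. \<forall>y\<in>H. x + y \<in> H) \<and> (\<forall>x\<in>H. - x \<in> H)"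

definition NSS :: "'a::topological_group_add itself \<Rightarrow> bool" where
  "NSS _ \<longleftrightarrow> (\<exists>U::'a set. (\<exists>V. open V \<and> 0 \<in> V \<and> V \<subseteq> U) \<and>
      \<not> (\<exists>H. is_subgroup_add H \<and> H \<noteq> {0} \<and> H \<subseteq> U))"

definition zpow_add :: "int \<Rightarrow> 'a::group_add \<Rightarrow> 'a" where
  "zpow_add m g = (if 0 \<le> m then ((\<lambda>x. g + x) ^^ nat m) 0
                   else - (((\<lambda>x. g + x) ^^ nat (- m)) 0))"

end

theory Submission
  imports Defs
begin

text \<open>
  If G is not NSS, then every open neighbourhood U of 0 contains a
  nontrivial subgroup H; any g in H other than 0 is nonzero and has all its integer
  powers inside U.  The function x \<mapsto> d 0 x is continuous and vanishes at 0, so the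
  sets {x. d 0 x < (1/2)^n} are open neighbourhoods of 0.  Choosing such a g_n for
  each n gives d 0 (g_n^{m_n}) < (1/2)^n whatever the exponents m_n are, and the
  series is summable by comparison with the geometric series.
\<close>

lemma subgroup_add_iterate:
  assumes "is_subgroup_add H" "g \<in> H"
  shows "((\<lambda>x. g + x) ^^ k) 0 \<in> H"
  using assms by (induction k) (auto simp: is_subgroup_add_def)

lemma zpow_add_in_subgroup:
  assumes "is_subgroup_add H" "g \<in> H"
  shows "zpow_add m g \<in> H"
  using subgroup_add_iterate[OF assms] assms(1)
  by (auto simp: zpow_add_def is_subgroup_add_def)

lemma not_NSS_subgroup_in_open:
  fixes U :: "'a::topological_group_add set"
  assumes "\<not> NSS TYPE('a)" "open U" "0 \<in> U"
  obtains H where "is_subgroup_add H" "H \<noteq> {0}" "H \<subseteq> U"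
  using assms unfolding NSS_def by blast

lemma not_NSS_small_element:
  fixes U :: "'a::topological_group_add set"
  assumes "\<not> NSS TYPE('a)" "open U" "0 \<in> U"
  obtains g where "g \<noteq> 0" "\<And>m. zpow_add m g \<in> U"
proof -
  obtain H where H: "is_subgroup_add H" "H \<noteq> {0}" "H \<subseteq> U"
    using not_NSS_subgroup_in_open[OF assms] .
  then obtain g where "g \<in> H" "g \<noteq> 0"
    unfolding is_subgroup_add_def by blast
  moreover have "zpow_add m g \<in> U" for m
    using zpow_add_in_subgroup[OF H(1) \<open>g \<in> H\<close>] H(3) by blast
  ultimately show thesis
    using that by blast
qed

lemma continuous_on_curry_snd:
  assumes "continuous_on UNIV (\<lambda>p. f (fst p) (snd p))"
  shows "continuous_on UNIV (f a)"
proof -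
  have "continuous_on UNIV (Pair a :: 'b \<Rightarrow> 'a \<times> 'b)"
    by (intro continuous_intros)
  then have "continuous_on UNIV (\<lambda>x. f (fst (a, x)) (snd (a, x)))"
    by (rule continuous_on_compose2[OF assms]) simp
  then show ?thesis
    by simp
qed

lemma not_NSS_small_powers:
  fixes f :: "'a::topological_group_add \<Rightarrow> real"
  assumes "\<not> NSS TYPE('a)" "continuous_on UNIV f" "f 0 = 0" "\<epsilon> > 0"
  obtains g where "g \<noteq> 0" "\<And>m. f (zpow_add m g) < \<epsilon>"
proof -
  have "open (f -` {..<\<epsilon>})"
    by (rule open_vimage[OF _ assms(2)]) simp
  moreover have "0 \<in> f -` {..<\<epsilon>}"
    using assms(3,4) by simp
  ultimately obtain g where "g \<noteq> 0" "\<And>m. zpow_add m g \<in> f -` {..<\<epsilon>}"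
    using not_NSS_small_element[OF assms(1)] by blast
  then show thesis
    using that by simp
qed

theorem lemma5p2:
  fixes d :: "'a::{topological_group_add, t2_space} \<Rightarrow> 'a \<Rightarrow> real"
  assumes notNSS: "\<not> NSS TYPE('a)"
    and d_nonneg: "\<And>x y. d x y \<ge> 0"
    and d_cont: "continuous_on UNIV (\<lambda>p. d (fst p) (snd p))"
    and d_ee: "d 0 0 = 0"
  shows "\<exists>g :: nat \<Rightarrow> 'a. (\<forall>n. g n \<noteq> 0) \<and>
           (\<forall>m :: nat \<Rightarrow> int. summable (\<lambda>n. d 0 (zpow_add (m n) (g n))))"
proof -
  have "\<forall>n. \<exists>g. g \<noteq> 0 \<and> (\<forall>m. d 0 (zpow_add m g) < (1/2::real)^n)"
  proof
    fix n :: nat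
    obtain g where "g \<noteq> 0" "\<And>m. d 0 (zpow_add m g) < (1/2::real)^n"
      by (rule not_NSS_small_powers[OF notNSS continuous_on_curry_snd[OF d_cont] d_ee,
            where \<epsilon>="(1/2)^n"]) simp_all
    then show "\<exists>g. g \<noteq> 0 \<and> (\<forall>m. d 0 (zpow_add m g) < (1/2::real)^n)" by blast
  qed
  then obtain g where g_nonzero: "\<And>n. g n \<noteq> 0"
    and g_small: "\<And>n m. d 0 (zpow_add m (g n)) < (1/2)^n"
    by metis
  have "summable (\<lambda>n. d 0 (zpow_add (m n) (g n)))" for m :: "nat \<Rightarrow> int"
    by (rule summable_comparison_test[where g="\<lambda>n. (1/2::real)^n"])
      (use g_small d_nonneg in \<open>auto intro: less_imp_le\<close>)
  with g_nonzero show ?thesis by blast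
qed

end
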